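(* Let $\{A_n\}_{n\ge 0}$ be determined by $A_0=A_1=1$ and $(n+1)A_{n+1}=2(n+1)A_n+3(n-1)A_{n-1}$ for $n\ge 1$ (the numbers of directed animals of size $n$). Then $\{A_n\}_{n\ge 0}$ is log-convex.
   Context: A sequence $a_0,a_1,\ldots$ of nonnegative real numbers is log-convex if $a_{k-1}a_{k+1}\ge a_k^2$ for all $k\ge 1$. *)

theory Defs
  imports Complex_Main
begin

text \<open>Directed animals: A 0 = A 1 = 1 and (n+1) A(n+1) = 2(n+1) A n + 3(n-1) A(n-1) for n \<ge> 1.
  Here written with index n+1 replaced by Suc (Suc m), i.e. n = m+1.\<close>
fun dir_animals :: "nat \<Rightarrow> real" where
  "dir_animals 0 = 1"
| "dir_animals (Suc 0) = 1"
| "dir_animals (Suc (Suc m)) =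
     (2 * (real m + 2) * dir_animals (Suc m) + 3 * real m * dir_animals m) / (real m + 2)"

definition log_convex :: "(nat \<Rightarrow> real) \<Rightarrow> bool" where
  "log_convex a \<longleftrightarrow> (\<forall>k. a k \<ge> 0) \<and> (\<forall>k\<ge>1. a (k - 1) * a (k + 1) \<ge> (a k)^2)"

lemma dir_animals_rec:
  assumes "n \<ge> 1"
  shows "real (n + 1) * dir_animals (n + 1) = 2 * real (n + 1) * dir_animals n + 3 * (real n - 1) * dir_animals (n - 1)"
proof -
  obtain m where n: "n = Suc m" using assms by (cases n) auto
  have "real m + 2 > 0" by simp
  then show ?thesis unfolding n
    by (simp add: field_simps of_nat_Suc)
qed

end

theory Submission
  imports Defs
begin

text \<open>
  For the ratios r n = A (n + 1) / A n the recurrence reads r (n + 1) = 2 + 3 n / ((n + 2) r n),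
  which is decreasing in r n. Hence a lower and an upper bound for r n turn into an upper and a
  lower bound for r (n + 1), and induction gives 6 n / (2 n + 1) \<le> r n \<le> 3 (2 n + 1) / (2 n + 2)
  for n \<ge> 1. Log-convexity of a positive sequence means that its ratios are nondecreasing, and
  r n \<le> r (n + 1) is equivalent to (n + 2) (r n - 1)^2 \<le> 4 n + 2, which the upper bound implies.
\<close>

lemma log_convexI_ratio:
  fixes a :: "nat \<Rightarrow> real"
  assumes pos: "\<And>k. a k > 0"
    and ratio_mono: "\<And>k. a (Suc k) / a k \<le> a (Suc (Suc k)) / a (Suc k)"
  shows "log_convex a"
  unfolding log_convex_def
proof (intro conjI allI impI)
  fix k :: nat
  show "a k \<ge> 0" using pos[of k] by simp
next
  fix k :: nat
  assume "k \<ge> 1"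
  then obtain j where k: "k = Suc j" by (cases k) auto
  from ratio_mono[of j] pos[of j] pos[of "Suc j"]
  show "a (k - 1) * a (k + 1) \<ge> (a k)^2"
    by (simp add: k divide_simps power2_eq_square mult.commute)
qed

lemma dir_animals_pos: "dir_animals n > 0"
  by (induction n rule: dir_animals.induct) (simp_all add: add_pos_nonneg)

definition dir_animals_ratio :: "nat \<Rightarrow> real" where
  "dir_animals_ratio n = dir_animals (Suc n) / dir_animals n"

lemma dir_animals_ratio_Suc:
  "dir_animals_ratio (Suc n) = 2 + 3 * real n / ((real n + 2) * dir_animals_ratio n)"
proof -
  define a b where "a = dir_animals n" and "b = dir_animals (Suc n)"
  have "a > 0" "b > 0" by (simp_all add: a_def b_def dir_animals_pos)
  have "dir_animals_ratio (Suc n) = (2 * (real n + 2) * b + 3 * real n * a) / ((real n + 2) * b)"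
    by (simp add: dir_animals_ratio_def a_def b_def)
  also have "\<dots> = 2 + 3 * real n / ((real n + 2) * (b / a))"
    using \<open>a > 0\<close> \<open>b > 0\<close> by (simp add: divide_simps)
  finally show ?thesis by (simp add: dir_animals_ratio_def a_def b_def)
qed

lemma dir_animals_ratio_bounds:
  assumes "n \<ge> 1"
  shows "6 * real n / (2 * real n + 1) \<le> dir_animals_ratio n \<and>
    dir_animals_ratio n \<le> 3 * (2 * real n + 1) / (2 * real n + 2)"
  using assms
proof (induction n rule: nat_induct_at_least)
  case base
  then show ?case by (simp add: dir_animals_ratio_def)
next
  case (Suc n)
  define x where "x = real n"
  define r where "r = dir_animals_ratio n"
  have x: "x \<ge> 1" using Suc.hyps by (simp add: x_def)
  have lower: "6 * x / (2 * x + 1) \<le> r" and upper: "r \<le> 3 * (2 * x + 1) / (2 * x + 2)"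
    using Suc.IH by (simp_all add: x_def r_def)
  have lower_pos: "6 * x / (2 * x + 1) > 0" using x by simp
  have r_pos: "r > 0" using lower_pos lower by (rule less_le_trans)
  have rec: "dir_animals_ratio (Suc n) = 2 + 3 * x / ((x + 2) * r)"
    by (simp add: dir_animals_ratio_Suc x_def r_def)
  have "2 + 3 * x / ((x + 2) * r) \<le> 2 + 3 * x / ((x + 2) * (6 * x / (2 * x + 1)))"
    using x lower lower_pos r_pos by (intro add_left_mono divide_left_mono mult_left_mono mult_pos_pos) auto
  also have "\<dots> = 3 * (2 * (x + 1) + 1) / (2 * (x + 1) + 2)"
    using x by (simp add: divide_simps) (simp add: algebra_simps)
  finally have new_upper: "dir_animals_ratio (Suc n) \<le> 3 * (2 * (x + 1) + 1) / (2 * (x + 1) + 2)"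
    using rec by simp
  have "6 * (x + 1) / (2 * (x + 1) + 1) \<le> 2 + 3 * x / ((x + 2) * (3 * (2 * x + 1) / (2 * x + 2)))"
    using x by (simp add: divide_simps) (simp add: algebra_simps)
  also have "\<dots> \<le> 2 + 3 * x / ((x + 2) * r)"
    using x upper r_pos by (intro add_left_mono divide_left_mono mult_left_mono mult_pos_pos) auto
  finally have new_lower: "6 * (x + 1) / (2 * (x + 1) + 1) \<le> dir_animals_ratio (Suc n)"
    using rec by simp
  show ?case using new_lower new_upper by (simp add: x_def add.commute)
qed

lemma dir_animals_ratio_mono: "dir_animals_ratio n \<le> dir_animals_ratio (Suc n)"
proof (cases "n = 0")
  case True
  then show ?thesis by (simp add: dir_animals_ratio_def)
next
  case False
  define x where "x = real n"
  define r where "r = dir_animals_ratio n"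
  have x: "x \<ge> 1" using False by (simp add: x_def)
  have lower: "6 * x / (2 * x + 1) \<le> r" and upper: "r \<le> 3 * (2 * x + 1) / (2 * x + 2)"
    using dir_animals_ratio_bounds[of n] False by (simp_all add: x_def r_def)
  have "1 \<le> 6 * x / (2 * x + 1)" using x by (simp add: divide_simps)
  with lower have r: "1 \<le> r" by linarith
  have "(r - 1)^2 \<le> ((4 * x + 1) / (2 * x + 2))^2"
    using r upper x by (intro power_mono) (simp_all add: divide_simps algebra_simps)
  then have "(x + 2) * (r - 1)^2 \<le> (x + 2) * ((4 * x + 1) / (2 * x + 2))^2"
    using x by (intro mult_left_mono) auto
  also have "\<dots> \<le> 4 * x + 2"
    using x by (simp add: divide_simps power2_eq_square) (simp add: algebra_simps)
  finally have "(x + 2) * (r - 1)^2 \<le> 4 * x + 2" .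
  then have "(r - 2) * ((x + 2) * r) \<le> 3 * x"
    by (simp add: power2_eq_square algebra_simps)
  moreover have "(x + 2) * r > 0" using r x by simp
  ultimately have "r - 2 \<le> 3 * x / ((x + 2) * r)"
    by (simp add: pos_le_divide_eq)
  then show ?thesis
    by (simp add: dir_animals_ratio_Suc flip: x_def r_def)
qed

theorem corollary3p7:
  shows "log_convex dir_animals"
proof (rule log_convexI_ratio)
  show "dir_animals k > 0" for k
    by (rule dir_animals_pos)
  show "dir_animals (Suc k) / dir_animals k \<le> dir_animals (Suc (Suc k)) / dir_animals (Suc k)" for k
    using dir_animals_ratio_mono[of k] by (simp add: dir_animals_ratio_def)
qed

end
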